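(* Let $(X,d)$ be a Hadamard space, $o\in X$ a fixed point and $\|x\|:=d(x,o)$ for $x\in X$. Let $C$ be a nonempty closed convex subset of $X$ and $T:C\to C$ a nonexpansive mapping with nonempty fixed point set $F(T)$. Let $\{\alpha_n\}_{n\ge0}$, $\{\beta_n\}_{n\ge0}$ be sequences in $(0,1)$ and $\{u_n\}_{n\ge0}\subset X$. Let $x_0\in C$ be arbitrary and define for $n\geqslant0$ $$y_n=\alpha_nu_n\oplus(1-\alpha_n)Tx_n,\qquad x_{n+1}=(1-\beta_n)x_n\oplus\beta_nP_Cy_n.$$ Suppose (i) $\lim_{n\to\infty}\alpha_n=0$ and $\sum_{n=0}^\infty\alpha_n=\infty$; (ii) $0<\liminf_{n\to\infty}\beta_n\leqslant\limsup_{n\to\infty}\beta_n<1$; (iii) $\sum_{n=0}^\infty\alpha_n\|u_n\|<\infty$. Then $\{x_n\}$ converges (in the metric $d$) to some $q\in F(T)$.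
   Context: A Hadamard space is a complete CAT(0) space. For $x,y\in X$ and $\lambda\in[0,1]$, $\lambda x\oplus(1-\lambda)y$ denotes the unique point $z$ on the geodesic segment from $x$ to $y$ with $d(z,x)=(1-\lambda)d(x,y)$ and $d(z,y)=\lambda d(x,y)$. $P_C:X\to C$ is the metric projection onto $C$ (the nearest-point map). $T$ nonexpansive means $d(Tx,Ty)\le d(x,y)$ for all $x,y\in C$, and $F(T)=\{x\in C: Tx=x\}$. *)

theory Defs
  imports "HOL-Analysis.Analysis"
begin

definition geodesic_path :: "(real \<Rightarrow> 'a::metric_space) \<Rightarrow> 'a \<Rightarrow> 'a \<Rightarrow> bool" where
  "geodesic_path g x y \<longleftrightarrow> g 0 = x \<and> g (dist x y) = y \<and>
     (\<forall>s\<in>{0..dist x y}. \<forall>t\<in>{0..dist x y}. dist (g s) (g t) = \<bar>s - t\<bar>)"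

definition geodesic_space :: "'a::metric_space itself \<Rightarrow> bool" where
  "geodesic_space _ \<longleftrightarrow> (\<forall>x y::'a. \<exists>g. geodesic_path g x y)"

text \<open>Pairs (point on the side g from x to y, its comparison point on the side [a,b] in the
  Euclidean plane, modelled as the complex numbers).\<close>
definition side_pairs :: "(real \<Rightarrow> 'a::metric_space) \<Rightarrow> 'a \<Rightarrow> 'a \<Rightarrow> complex \<Rightarrow> complex
    \<Rightarrow> ('a \<times> complex) set" where
  "side_pairs g x y a b = {(g s, a + (s / dist x y) *\<^sub>R (b - a)) | s. s \<in> {0..dist x y}}"

definition CAT0 :: "'a::metric_space itself \<Rightarrow> bool" where
  "CAT0 _ \<longleftrightarrow> geodesic_space TYPE('a) \<and>
    (\<forall>(x::'a) y z g1 g2 g3 (a::complex) b c.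
       geodesic_path g1 x y \<and> geodesic_path g2 y z \<and> geodesic_path g3 z x \<and>
       dist a b = dist x y \<and> dist b c = dist y z \<and> dist c a = dist z x \<longrightarrow>
       (\<forall>(p, p') \<in> side_pairs g1 x y a b \<union> side_pairs g2 y z b c \<union> side_pairs g3 z x c a.
        \<forall>(q, q') \<in> side_pairs g1 x y a b \<union> side_pairs g2 y z b c \<union> side_pairs g3 z x c a.
          dist p q \<le> dist p' q'))"

definition hadamard_space :: "'a::metric_space itself \<Rightarrow> bool" where
  "hadamard_space T \<longleftrightarrow> CAT0 T \<and> complete (UNIV :: 'a set)"

text \<open>geo_comb l x y = l x \<oplus> (1-l) y: the point z with d(z,x) = (1-l) d(x,y), d(z,y) = l d(x,y).\<close>
definition geo_comb :: "real \<Rightarrow> 'a::metric_space \<Rightarrow> 'a \<Rightarrow> 'a" where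
  "geo_comb l x y = (THE z. dist z x = (1 - l) * dist x y \<and> dist z y = l * dist x y)"

definition geo_convex :: "'a::metric_space set \<Rightarrow> bool" where
  "geo_convex C \<longleftrightarrow> (\<forall>x\<in>C. \<forall>y\<in>C. \<forall>l\<in>{0..1}. geo_comb l x y \<in> C)"

definition metric_proj :: "'a::metric_space set \<Rightarrow> 'a \<Rightarrow> 'a" where
  "metric_proj C x = (SOME p. p \<in> C \<and> (\<forall>c\<in>C. dist x p \<le> dist x c))"

definition nonexpansive_on :: "'a::metric_space set \<Rightarrow> ('a \<Rightarrow> 'a) \<Rightarrow> bool" where
  "nonexpansive_on C T \<longleftrightarrow> (\<forall>x\<in>C. \<forall>y\<in>C. dist (T x) (T y) \<le> dist x y)"

definition fixpoints_on :: "'a set \<Rightarrow> ('a \<Rightarrow> 'a) \<Rightarrow> 'a set" where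
  "fixpoints_on C T = {x\<in>C. T x = x}"

end

(* In a Hadamard space the CAT(0) comparison with a Euclidean triangle gives the CN inequality
   d(l x + (1-l) y, z)^2 <= l d(x,z)^2 + (1-l) d(y,z)^2 - l (1-l) d(x,y)^2.
   It makes squared distances and squared asymptotic radii uniformly convex, so metric
   projections and asymptotic centres exist; the latter give demiclosedness of I - T.
   With q the projection of o onto F(T) and s(n) = d(x_n, q)^2, CN applied to both steps
   of the scheme yields s(n+1) <= (1 - a_n b_n) s(n) + a_n b_n delta(n) + c(n) with c
   summable, and s(n+1) <= s(n) - b_n (1 - b_n) d(x_n, P_C y_n)^2 + rho(n) with rho -> 0.
   Where the second decrement is small, x_n is almost a fixed point, and demiclosedness
   turns this into delta(n) < epsilon; divergence of sum a_n b_n then forces s(n) -> 0. *)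

theory Submission
  imports Defs
begin

section \<open>Comparison triangles and the CN inequality\<close>

lemma norm_convex_comb_power2:
  fixes u v :: "'a::real_inner"
  shows "(norm (t *\<^sub>R u + (1 - t) *\<^sub>R v))\<^sup>2
    = t * (norm u)\<^sup>2 + (1 - t) * (norm v)\<^sup>2 - t * (1 - t) * (norm (u - v))\<^sup>2"
  by (simp add: power2_norm_eq_inner inner_diff_left inner_diff_right inner_add_left
      inner_add_right inner_commute algebra_simps)

definition comparison_apex :: "real \<Rightarrow> real \<Rightarrow> real \<Rightarrow> complex" where
  "comparison_apex p r s =
    (let a = (p\<^sup>2 + r\<^sup>2 - s\<^sup>2) / (2 * p) in Complex a (sqrt (r\<^sup>2 - a\<^sup>2)))"

lemma comparison_apex:
  assumes "0 \<le> r" "0 \<le> s" "s \<le> p + r" "p \<le> r + s" "r \<le> p + s"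
  shows "cmod (comparison_apex p r s) = r"
    and "cmod (complex_of_real p - comparison_apex p r s) = s"
proof -
  define a where "a = (p\<^sup>2 + r\<^sup>2 - s\<^sup>2) / (2 * p)"
  have apex: "comparison_apex p r s = Complex a (sqrt (r\<^sup>2 - a\<^sup>2))"
    by (simp add: comparison_apex_def a_def Let_def)
  have "a\<^sup>2 \<le> r\<^sup>2"
  proof (cases "p = 0")
    case False
    have "(p - r)\<^sup>2 \<le> s\<^sup>2" "s\<^sup>2 \<le> (p + r)\<^sup>2"
      using assms by (auto intro!: power_mono simp: abs_le_square_iff[symmetric])
    then have "\<bar>p\<^sup>2 + r\<^sup>2 - s\<^sup>2\<bar> \<le> \<bar>2 * p\<bar> * r"
      using assms by (auto simp: power2_eq_square algebra_simps abs_le_iff abs_if)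
    then have "\<bar>a\<bar> \<le> r" using False by (simp add: a_def abs_divide divide_le_eq mult.commute)
    then show ?thesis by (metis abs_le_square_iff abs_of_nonneg assms(1))
  qed (simp add: a_def)
  then have norm_apex: "(cmod (comparison_apex p r s))\<^sup>2 = r\<^sup>2"
    by (simp add: apex cmod_power2)
  then show "cmod (comparison_apex p r s) = r"
    using assms(1) by (simp add: power2_eq_iff_nonneg)
  have "(cmod (complex_of_real p - comparison_apex p r s))\<^sup>2 = s\<^sup>2"
  proof (cases "p = 0")
    case True
    then show ?thesis using norm_apex assms by simp
  next
    case False
    have "2 * p * a = p\<^sup>2 + r\<^sup>2 - s\<^sup>2" using False by (simp add: a_def)
    then show ?thesis using norm_apex
      by (simp add: apex cmod_power2 power2_diff algebra_simps)
  qed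
  then show "cmod (complex_of_real p - comparison_apex p r s) = s"
    using assms(2) by (simp add: power2_eq_iff_nonneg)
qed

lemma comparison_apex_dist:
  fixes x y z :: "'a::metric_space"
  defines "c \<equiv> comparison_apex (dist x y) (dist x z) (dist y z)"
  shows "cmod c = dist x z" "cmod (complex_of_real (dist x y) - c) = dist y z"
  using comparison_apex[of "dist x z" "dist y z" "dist x y"]
    dist_triangle[of y z x] dist_triangle[of x y z] dist_triangle[of x z y]
  by (simp_all add: c_def dist_commute)

lemma geodesic_path_reverse:
  "geodesic_path g x y \<Longrightarrow> geodesic_path (\<lambda>t. g (dist x y - t)) y x"
  unfolding geodesic_path_def by (auto simp: dist_commute)

lemma CAT0_geodesic_path_exists:
  "CAT0 TYPE('a::metric_space) \<Longrightarrow> \<exists>g. geodesic_path g x (y::'a)"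
  unfolding CAT0_def geodesic_space_def by blast

lemma side_pairsI:
  assumes "t \<in> {0..1}" and "dist a b = dist x y"
  shows "(g (t * dist x y), a + t *\<^sub>R (b - a)) \<in> side_pairs g x y a b"
proof -
  have "t * dist x y \<in> {0..dist x y}" using assms(1) by (auto simp: mult_left_le_one_le)
  moreover have "a + t *\<^sub>R (b - a) = a + (t * dist x y / dist x y) *\<^sub>R (b - a)"
    using assms(2) by (cases "dist x y = 0") auto
  ultimately show ?thesis unfolding side_pairs_def by blast
qed

text \<open>The comparison triangle of \<open>x, y, z\<close> has the vertices \<open>0\<close>, \<open>dist x y\<close> and \<open>c\<close>.\<close>
lemma CAT0_comparison:
  assumes cat: "CAT0 TYPE('a::metric_space)"
    and g: "geodesic_path g x y" and h: "geodesic_path h x (z::'a)"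
    and \<sigma>: "\<sigma> \<in> {0..1}" and \<tau>: "\<tau> \<in> {0..1}"
  defines "c \<equiv> comparison_apex (dist x y) (dist x z) (dist y z)"
  shows "dist (g (\<sigma> * dist x y)) (h (\<tau> * dist x z))
     \<le> cmod (\<sigma> *\<^sub>R complex_of_real (dist x y) - \<tau> *\<^sub>R c)"
proof -
  define b where "b = complex_of_real (dist x y)"
  have sides: "dist 0 b = dist x y" "dist b c = dist y z" "dist c 0 = dist z x"
    using comparison_apex_dist[of x y z] by (simp_all add: b_def c_def dist_norm dist_commute)
  obtain g2 where g2: "geodesic_path g2 y z" using CAT0_geodesic_path_exists[OF cat] by blast
  define g3 where "g3 = (\<lambda>t. h (dist x z - t))"
  have g3: "geodesic_path g3 z x" unfolding g3_def by (rule geodesic_path_reverse[OF h])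
  have "(g (\<sigma> * dist x y), \<sigma> *\<^sub>R b) \<in> side_pairs g x y 0 b"
    using side_pairsI[OF \<sigma> sides(1), of g] by simp
  moreover have "(h (\<tau> * dist x z), \<tau> *\<^sub>R c) \<in> side_pairs g3 z x c 0"
  proof -
    have "1 - \<tau> \<in> {0..1}" using \<tau> by simp
    from side_pairsI[OF this sides(3), of g3] show ?thesis
      by (simp add: g3_def dist_commute algebra_simps)
  qed
  ultimately have "dist (g (\<sigma> * dist x y)) (h (\<tau> * dist x z)) \<le> dist (\<sigma> *\<^sub>R b) (\<tau> *\<^sub>R c)"
    using cat g g2 g3 sides unfolding CAT0_def by blast
  then show ?thesis by (simp add: dist_norm b_def)
qed

lemma CAT0_dist_geodesic_point:
  assumes cat: "CAT0 TYPE('a::metric_space)"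
    and g: "geodesic_path g x y" and \<sigma>: "\<sigma> \<in> {0..1}"
  shows "(dist (g (\<sigma> * dist x y)) (z::'a))\<^sup>2
      \<le> (1 - \<sigma>) * (dist x z)\<^sup>2 + \<sigma> * (dist y z)\<^sup>2 - \<sigma> * (1 - \<sigma>) * (dist x y)\<^sup>2"
    and "dist (g (\<sigma> * dist x y)) z \<le> (1 - \<sigma>) * dist x z + \<sigma> * dist y z"
proof -
  obtain h where h: "geodesic_path h x z" using CAT0_geodesic_path_exists[OF cat] by blast
  define b where "b = complex_of_real (dist x y)"
  define c where "c = comparison_apex (dist x y) (dist x z) (dist y z)"
  have c: "cmod c = dist x z" "cmod (b - c) = dist y z"
    using comparison_apex_dist[of x y z] by (simp_all add: c_def b_def)
  have "h (1 * dist x z) = z" using h by (simp add: geodesic_path_def)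
  then have le: "dist (g (\<sigma> * dist x y)) z \<le> cmod (\<sigma> *\<^sub>R (b - c) + (1 - \<sigma>) *\<^sub>R (- c))"
    using CAT0_comparison[OF cat g h \<sigma>, of 1] by (simp add: b_def c_def algebra_simps)
  have "(dist (g (\<sigma> * dist x y)) z)\<^sup>2 \<le> (cmod (\<sigma> *\<^sub>R (b - c) + (1 - \<sigma>) *\<^sub>R (- c)))\<^sup>2"
    using le by (simp add: power_mono)
  also have "\<dots> = (1 - \<sigma>) * (dist x z)\<^sup>2 + \<sigma> * (dist y z)\<^sup>2 - \<sigma> * (1 - \<sigma>) * (dist x y)\<^sup>2"
    unfolding norm_convex_comb_power2 using c by (simp add: b_def)
  finally show "(dist (g (\<sigma> * dist x y)) z)\<^sup>2
      \<le> (1 - \<sigma>) * (dist x z)\<^sup>2 + \<sigma> * (dist y z)\<^sup>2 - \<sigma> * (1 - \<sigma>) * (dist x y)\<^sup>2" .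
  have "cmod (\<sigma> *\<^sub>R (b - c) + (1 - \<sigma>) *\<^sub>R (- c)) \<le> \<sigma> * dist y z + (1 - \<sigma>) * dist x z"
    using norm_triangle_ineq[of "\<sigma> *\<^sub>R (b - c)" "(1 - \<sigma>) *\<^sub>R (- c)"] \<sigma> c by simp
  then show "dist (g (\<sigma> * dist x y)) z \<le> (1 - \<sigma>) * dist x z + \<sigma> * dist y z"
    using le by simp
qed

lemma CAT0_dist_geodesic_points:
  assumes cat: "CAT0 TYPE('a::metric_space)"
    and g: "geodesic_path g x y" and h: "geodesic_path h x (z::'a)" and \<sigma>: "\<sigma> \<in> {0..1}"
  shows "dist (g (\<sigma> * dist x y)) (h (\<sigma> * dist x z)) \<le> \<sigma> * dist y z"
proof -
  define c where "c = comparison_apex (dist x y) (dist x z) (dist y z)"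
  have "\<sigma> *\<^sub>R complex_of_real (dist x y) - \<sigma> *\<^sub>R c = \<sigma> *\<^sub>R (complex_of_real (dist x y) - c)"
    by (simp add: algebra_simps)
  then show ?thesis
    using CAT0_comparison[OF cat g h \<sigma> \<sigma>] comparison_apex_dist[of x y z] \<sigma> by (simp add: c_def)
qed

lemma geodesic_path_point_dist:
  assumes g: "geodesic_path g x y" and l: "l \<in> {0..1}"
  shows "dist (g ((1 - l) * dist x y)) x = (1 - l) * dist x y"
    and "dist (g ((1 - l) * dist x y)) y = l * dist x y"
proof -
  define t where "t = (1 - l) * dist x y"
  have t: "t \<in> {0..dist x y}" using l by (auto simp: t_def mult_left_le_one_le)
  have gd: "dist (g t) (g s) = \<bar>t - s\<bar>" if "s \<in> {0..dist x y}" for s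
    using g t that by (simp add: geodesic_path_def)
  have ends: "g 0 = x" "g (dist x y) = y" using g by (simp_all add: geodesic_path_def)
  have "dist (g t) x = \<bar>t\<bar>" "dist (g t) y = \<bar>t - dist x y\<bar>"
    using gd[of 0] gd[of "dist x y"] by (simp_all add: ends)
  with t show "dist (g ((1 - l) * dist x y)) x = (1 - l) * dist x y"
    "dist (g ((1 - l) * dist x y)) y = l * dist x y"
    by (auto simp: t_def algebra_simps)
qed

lemma geo_comb_eq_geodesic_path:
  assumes cat: "CAT0 TYPE('a::metric_space)"
    and g: "geodesic_path g x (y::'a)" and l: "l \<in> {0..1}"
  shows "geo_comb l x y = g ((1 - l) * dist x y)"
  unfolding geo_comb_def
proof (rule the_equality)
  define w where "w = g ((1 - l) * dist x y)"
  show "dist w x = (1 - l) * dist x y \<and> dist w y = l * dist x y"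
    using geodesic_path_point_dist[OF g l] by (simp add: w_def)
  fix z assume z: "dist z x = (1 - l) * dist x y \<and> dist z y = l * dist x y"
  have "(dist w z)\<^sup>2 \<le> l * (dist x z)\<^sup>2 + (1 - l) * (dist y z)\<^sup>2 - (1 - l) * l * (dist x y)\<^sup>2"
    using CAT0_dist_geodesic_point(1)[OF cat g, of "1 - l" z] l by (simp add: w_def)
  also have "\<dots> = 0"
  proof -
    have dx: "dist x z = (1 - l) * dist x y" and dy: "dist y z = l * dist x y"
      using z by (simp_all add: dist_commute)
    show ?thesis unfolding dx dy by (simp add: power2_eq_square algebra_simps)
  qed
  finally show "z = w" by simp
qed

lemma dist_geo_comb:
  assumes cat: "CAT0 TYPE('a::metric_space)" and l: "l \<in> {0..1}"
  shows "dist (geo_comb l x y) x = (1 - l) * dist x (y::'a)"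
    and "dist (geo_comb l x y) y = l * dist x y"
proof -
  obtain g where g: "geodesic_path g x y" using CAT0_geodesic_path_exists[OF cat] by blast
  show "dist (geo_comb l x y) x = (1 - l) * dist x (y::'a)" "dist (geo_comb l x y) y = l * dist x y"
    using geodesic_path_point_dist[OF g l] geo_comb_eq_geodesic_path[OF cat g l] by simp_all
qed

lemma geo_comb_commute: "geo_comb l x y = geo_comb (1 - l) y x"
  unfolding geo_comb_def by (simp add: dist_commute conj_commute)

lemma dist_geo_comb_power2_le:
  assumes cat: "CAT0 TYPE('a::metric_space)" and l: "l \<in> {0..1}"
  shows "(dist (geo_comb l x y) (z::'a))\<^sup>2
    \<le> l * (dist x z)\<^sup>2 + (1 - l) * (dist y z)\<^sup>2 - l * (1 - l) * (dist x y)\<^sup>2"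
proof -
  obtain g where g: "geodesic_path g x y" using CAT0_geodesic_path_exists[OF cat] by blast
  show ?thesis using CAT0_dist_geodesic_point(1)[OF cat g, of "1 - l" z] l
    by (simp add: geo_comb_eq_geodesic_path[OF cat g l] algebra_simps)
qed

lemma dist_geo_comb_le:
  assumes cat: "CAT0 TYPE('a::metric_space)" and l: "l \<in> {0..1}"
  shows "dist (geo_comb l x y) (z::'a) \<le> l * dist x z + (1 - l) * dist y z"
proof -
  obtain g where g: "geodesic_path g x y" using CAT0_geodesic_path_exists[OF cat] by blast
  show ?thesis using CAT0_dist_geodesic_point(2)[OF cat g, of "1 - l" z] l
    by (simp add: geo_comb_eq_geodesic_path[OF cat g l] algebra_simps)
qed

lemma dist_geo_comb_geo_comb_le:
  assumes cat: "CAT0 TYPE('a::metric_space)" and l: "l \<in> {0..1}"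
  shows "dist (geo_comb l x y) (geo_comb l x z) \<le> (1 - l) * dist y (z::'a)"
proof -
  obtain g where g: "geodesic_path g x y" using CAT0_geodesic_path_exists[OF cat] by blast
  obtain h where h: "geodesic_path h x z" using CAT0_geodesic_path_exists[OF cat] by blast
  show ?thesis using CAT0_dist_geodesic_points[OF cat g h, of "1 - l"] l
    by (simp add: geo_comb_eq_geodesic_path[OF cat g l] geo_comb_eq_geodesic_path[OF cat h l])
qed

lemma geo_comb_unique:
  assumes cat: "CAT0 TYPE('a::metric_space)" and l: "l \<in> {0..1}"
    and dx: "dist x z = (1 - l) * dist x y" and dy: "dist y z = l * dist x (y::'a)"
  shows "geo_comb l x y = z"
proof -
  have "(dist (geo_comb l x y) z)\<^sup>2
      \<le> l * (dist x z)\<^sup>2 + (1 - l) * (dist y z)\<^sup>2 - l * (1 - l) * (dist x y)\<^sup>2"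
    by (rule dist_geo_comb_power2_le[OF cat l])
  also have "\<dots> = 0" unfolding dx dy by (simp add: power2_eq_square algebra_simps)
  finally show ?thesis by simp
qed

lemma geo_convex_Int: "geo_convex A \<Longrightarrow> geo_convex B \<Longrightarrow> geo_convex (A \<inter> B)"
  unfolding geo_convex_def by blast

lemma geo_convex_cball:
  assumes cat: "CAT0 TYPE('a::metric_space)"
  shows "geo_convex (cball (c::'a) r)"
  unfolding geo_convex_def
proof (intro ballI)
  fix a b l assume ab: "a \<in> cball c r" "b \<in> cball c r" and l: "l \<in> {0..1::real}"
  have "dist (geo_comb l a b) c \<le> l * dist a c + (1 - l) * dist b c"
    by (rule dist_geo_comb_le[OF cat l])
  also have "\<dots> \<le> l * r + (1 - l) * r"
    using ab l by (intro add_mono mult_left_mono) (auto simp: dist_commute)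
  finally show "geo_comb l a b \<in> cball c r" by (simp add: dist_commute algebra_simps)
qed

section \<open>Minimizers, metric projections and fixed point sets\<close>

lemma power2_le_power2_add:
  fixes a b d R :: real
  assumes "0 \<le> a" "0 \<le> b" "0 \<le> d" "a \<le> b + d" "a \<le> R"
  shows "a\<^sup>2 \<le> b\<^sup>2 + 2 * R * d"
proof (cases "a \<le> b")
  case True
  then have "a\<^sup>2 \<le> b\<^sup>2" using assms by (simp add: power_mono)
  moreover have "0 \<le> 2 * R * d" using assms by simp
  ultimately show ?thesis by linarith
next
  case False
  have "a\<^sup>2 - b\<^sup>2 = (a - b) * (a + b)" by (simp add: power2_eq_square algebra_simps)
  also have "\<dots> \<le> d * (2 * R)" using False assms by (intro mult_mono) auto
  finally show ?thesis by (simp add: algebra_simps)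
qed

lemma minimizing_seq_Cauchy:
  fixes f :: "'a::metric_space \<Rightarrow> real"
  assumes K: "geo_convex K"
    and mid: "\<And>a b. a \<in> K \<Longrightarrow> b \<in> K \<Longrightarrow>
      f (geo_comb (1/2) a b) \<le> (f a + f b) / 2 - (dist a b)\<^sup>2 / 4"
    and \<mu>: "\<And>w. w \<in> K \<Longrightarrow> \<mu> \<le> f w"
    and zs: "\<And>n. zs n \<in> K" "\<And>n. f (zs n) < \<mu> + inverse (real (Suc n))"
  shows "Cauchy zs"
proof (rule metric_CauchyI)
  have zs_close: "(dist (zs n) (zs m))\<^sup>2 < 4 * inverse (real (Suc N))"
    if "N \<le> n" "N \<le> m" for n m N
  proof -
    have "geo_comb (1/2) (zs n) (zs m) \<in> K" using K zs(1) unfolding geo_convex_def by auto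
    then have "\<mu> \<le> (f (zs n) + f (zs m)) / 2 - (dist (zs n) (zs m))\<^sup>2 / 4"
      using \<mu> mid[OF zs(1) zs(1)] order_trans by blast
    then have "(dist (zs n) (zs m))\<^sup>2 \<le> 2 * f (zs n) + 2 * f (zs m) - 4 * \<mu>"
      by (simp add: field_simps)
    moreover have "inverse (real (Suc n)) \<le> inverse (real (Suc N))"
      "inverse (real (Suc m)) \<le> inverse (real (Suc N))"
      using that by (simp_all add: le_imp_inverse_le)
    ultimately show ?thesis using zs(2)[of n] zs(2)[of m] by linarith
  qed
  fix e :: real assume e: "0 < e"
  obtain N where N: "inverse (real (Suc N)) < e\<^sup>2 / 4"
    using reals_Archimedean e by (metis divide_pos_pos zero_less_power zero_less_numeral)
  have "dist (zs m) (zs n) < e" if "N \<le> m" "N \<le> n" for m n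
  proof -
    have "(dist (zs m) (zs n))\<^sup>2 < e\<^sup>2" using zs_close[OF that] N by linarith
    then show ?thesis by (rule power_less_imp_less_base) (use e in linarith)
  qed
  then show "\<exists>M. \<forall>m\<ge>M. \<forall>n\<ge>M. dist (zs m) (zs n) < e" by blast
qed

lemma uniformly_convex_minimizer_exists:
  fixes f :: "'a::metric_space \<Rightarrow> real"
  assumes K: "complete K" "K \<noteq> {}" "geo_convex K"
    and bdd: "bdd_below (f ` K)"
    and mid: "\<And>a b. a \<in> K \<Longrightarrow> b \<in> K \<Longrightarrow>
      f (geo_comb (1/2) a b) \<le> (f a + f b) / 2 - (dist a b)\<^sup>2 / 4"
    and lip: "\<And>a. a \<in> K \<Longrightarrow> \<exists>L. \<forall>b\<in>K. f a \<le> f b + L * dist a b"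
  shows "\<exists>z\<in>K. \<forall>w\<in>K. f z \<le> f w"
proof -
  define \<mu> where "\<mu> = Inf (f ` K)"
  have \<mu>_le: "\<mu> \<le> f w" if "w \<in> K" for w
    unfolding \<mu>_def using bdd that by (auto intro: cInf_lower)
  have "\<exists>z\<in>K. f z < \<mu> + inverse (real (Suc n))" for n
    using cInf_less_iff[of "f ` K" "\<mu> + inverse (real (Suc n))"] K(2) bdd
    by (auto simp: \<mu>_def)
  then obtain zs where zs: "\<And>n. zs n \<in> K" "\<And>n. f (zs n) < \<mu> + inverse (real (Suc n))"
    by metis
  then obtain z where z: "z \<in> K" "zs \<longlonglongrightarrow> z"
    using minimizing_seq_Cauchy[OF K(3) mid \<mu>_le zs] K(1) unfolding complete_def by blast
  obtain L where L: "\<forall>b\<in>K. f z \<le> f b + L * dist z b" using lip[OF z(1)] by blast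
  have "(\<lambda>n. dist z (zs n)) \<longlonglongrightarrow> 0"
    using tendsto_dist[OF tendsto_const z(2), of z] by simp
  then have "(\<lambda>n. \<mu> + inverse (real (Suc n)) + L * dist z (zs n)) \<longlonglongrightarrow> \<mu> + 0 + L * 0"
    by (intro tendsto_add tendsto_mult tendsto_const LIMSEQ_inverse_real_of_nat)
  moreover have "f z \<le> \<mu> + inverse (real (Suc n)) + L * dist z (zs n)" for n
  proof -
    have "f z \<le> f (zs n) + L * dist z (zs n)" using L zs(1)[of n] by blast
    then show ?thesis using zs(2)[of n] by linarith
  qed
  ultimately have "f z \<le> \<mu>" using LIMSEQ_le_const by force
  then show ?thesis using z(1) \<mu>_le by force
qed

lemma uniformly_convex_minimizer_unique:
  fixes f :: "'a::metric_space \<Rightarrow> real"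
  assumes K: "geo_convex K"
    and mid: "\<And>a b. a \<in> K \<Longrightarrow> b \<in> K \<Longrightarrow>
      f (geo_comb (1/2) a b) \<le> (f a + f b) / 2 - (dist a b)\<^sup>2 / 4"
    and z: "z \<in> K" "\<forall>w\<in>K. f z \<le> f w" and b: "b \<in> K" "f b \<le> f z"
  shows "b = z"
proof -
  have "geo_comb (1/2) z b \<in> K" using K z b unfolding geo_convex_def by auto
  then have "f z \<le> (f z + f b) / 2 - (dist z b)\<^sup>2 / 4" using z mid[OF z(1) b(1)] by force
  then have "(dist z b)\<^sup>2 \<le> 2 * f b - 2 * f z" by (simp add: field_simps)
  then have "(dist z b)\<^sup>2 \<le> 0" using b(2) by linarith
  then show ?thesis by simp
qed

lemma nearest_point_pythagoras:
  assumes cat: "CAT0 TYPE('a::metric_space)" and K: "geo_convex K"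
    and p: "p \<in> K" "\<And>c. c \<in> K \<Longrightarrow> dist y p \<le> dist y c" and c: "(c::'a) \<in> K"
  shows "(dist y p)\<^sup>2 + (dist p c)\<^sup>2 \<le> (dist y c)\<^sup>2"
proof -
  define G where "G = (dist y p)\<^sup>2 + (dist p c)\<^sup>2 - (dist y c)\<^sup>2"
  have G_le: "G \<le> t * (dist p c)\<^sup>2" if t: "0 < t" "t \<le> 1" for t
  proof -
    have l: "1 - t \<in> {0..1}" using t by auto
    then have "geo_comb (1 - t) p c \<in> K" using K p c unfolding geo_convex_def by blast
    then have "dist y p \<le> dist (geo_comb (1 - t) p c) y" using p(2) by (metis dist_commute)
    then have "(dist y p)\<^sup>2 \<le> (dist (geo_comb (1 - t) p c) y)\<^sup>2" by (simp add: power_mono)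
    also have "\<dots> \<le> (1 - t) * (dist y p)\<^sup>2 + t * (dist y c)\<^sup>2 - (1 - t) * t * (dist p c)\<^sup>2"
      using dist_geo_comb_power2_le[OF cat l, of p c y] by (simp add: dist_commute)
    finally have "t * ((dist y p)\<^sup>2 + (1 - t) * (dist p c)\<^sup>2) \<le> t * (dist y c)\<^sup>2"
      by (simp add: algebra_simps)
    then have "(dist y p)\<^sup>2 + (1 - t) * (dist p c)\<^sup>2 \<le> (dist y c)\<^sup>2"
      using t by (simp add: mult_le_cancel_left_pos)
    then show ?thesis by (simp add: G_def algebra_simps)
  qed
  show ?thesis
  proof (rule ccontr)
    assume "\<not> ?thesis"
    then have G: "0 < G" by (simp add: G_def)
    then have D: "0 < (dist p c)\<^sup>2" using G_le[of 1] by linarith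
    define t where "t = min 1 (G / (2 * (dist p c)\<^sup>2))"
    have "0 < t" "t \<le> 1" using G D by (auto simp: t_def)
    then have "G \<le> t * (dist p c)\<^sup>2" by (rule G_le)
    also have "\<dots> \<le> G / 2" using D by (simp add: t_def min_def field_simps)
    finally show False using G by simp
  qed
qed

lemma CAT0_nearest_point_exists:
  assumes cat: "CAT0 TYPE('a::metric_space)" and K: "complete K" "K \<noteq> {}" "geo_convex K"
  shows "\<exists>p\<in>K. \<forall>c\<in>K. dist y p \<le> dist y (c::'a)"
proof -
  have "\<exists>p\<in>K. \<forall>c\<in>K. (dist y p)\<^sup>2 \<le> (dist y c)\<^sup>2"
  proof (rule uniformly_convex_minimizer_exists[OF K])
    show "bdd_below ((\<lambda>z. (dist y z)\<^sup>2) ` K)" by (auto intro: bdd_belowI[of _ 0])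
    show "(dist y (geo_comb (1/2) a b))\<^sup>2 \<le> ((dist y a)\<^sup>2 + (dist y b)\<^sup>2) / 2 - (dist a b)\<^sup>2 / 4"
      for a b using dist_geo_comb_power2_le[OF cat, of "1/2" a b y]
      by (simp add: dist_commute field_simps)
    show "\<exists>L. \<forall>b\<in>K. (dist y a)\<^sup>2 \<le> (dist y b)\<^sup>2 + L * dist a b" for a
    proof (intro exI ballI)
      fix b
      show "(dist y a)\<^sup>2 \<le> (dist y b)\<^sup>2 + 2 * dist y a * dist a b"
        using power2_le_power2_add[OF zero_le_dist zero_le_dist zero_le_dist
            dist_triangle[of y a b] order_refl]
        by (simp add: dist_commute)
    qed
  qed
  then show ?thesis by (auto simp: power_mono_iff)
qed

lemma metric_proj:
  assumes "CAT0 TYPE('a::metric_space)" "complete K" "K \<noteq> {}" "geo_convex K"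
  shows "metric_proj K y \<in> K" and "\<And>c. c \<in> K \<Longrightarrow> dist y (metric_proj K y) \<le> dist y (c::'a)"
  using someI_ex[OF CAT0_nearest_point_exists[OF assms, of y, unfolded Bex_def]]
  by (simp_all add: metric_proj_def)

lemma dist_metric_proj_le:
  assumes "CAT0 TYPE('a::metric_space)" "complete K" "K \<noteq> {}" "geo_convex K" "(c::'a) \<in> K"
  shows "dist (metric_proj K y) c \<le> dist y c"
proof -
  have "(dist (metric_proj K y) c)\<^sup>2 \<le> (dist y c)\<^sup>2"
    using nearest_point_pythagoras[OF assms(1,4) metric_proj[OF assms(1-4)] assms(5)]
    by (smt (verit) zero_le_power2)
  then show ?thesis by (simp add: power_mono_iff)
qed

lemma closed_fixpoints_on:
  assumes C: "closed C" and T: "nonexpansive_on C T"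
  shows "closed (fixpoints_on C T)"
  unfolding closed_sequential_limits
proof (intro allI impI)
  fix z l assume "(\<forall>n. z n \<in> fixpoints_on C T) \<and> z \<longlonglongrightarrow> l"
  then have z: "\<And>n. z n \<in> C" "\<And>n. T (z n) = z n" and lim: "z \<longlonglongrightarrow> l"
    by (auto simp: fixpoints_on_def)
  have "l \<in> C" using closed_sequentially[OF C] z(1) lim by blast
  have "(\<lambda>n. dist (T (z n)) (T l)) \<longlonglongrightarrow> 0"
  proof (rule Lim_null_comparison[OF always_eventually])
    show "\<forall>n. norm (dist (T (z n)) (T l)) \<le> dist (z n) l"
      using T z(1) \<open>l \<in> C\<close> by (simp add: nonexpansive_on_def)
  qed (rule tendsto_dist_iff[THEN iffD1, OF lim])
  then have "(\<lambda>n. T (z n)) \<longlonglongrightarrow> T l" by (rule tendsto_dist_iff[THEN iffD2])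
  then have "z \<longlonglongrightarrow> T l" using z(2) by simp
  then have "T l = l" using lim LIMSEQ_unique by blast
  then show "l \<in> fixpoints_on C T" using \<open>l \<in> C\<close> by (simp add: fixpoints_on_def)
qed

lemma geo_convex_fixpoints_on:
  assumes cat: "CAT0 TYPE('a::metric_space)" and C: "geo_convex (C::'a set)"
    and T: "nonexpansive_on C T"
  shows "geo_convex (fixpoints_on C T)"
  unfolding geo_convex_def
proof (intro ballI)
  fix p1 p2 l assume p: "p1 \<in> fixpoints_on C T" "p2 \<in> fixpoints_on C T" and l: "l \<in> {0..1::real}"
  define z where "z = geo_comb l p1 p2"
  have "z \<in> C" using C p l unfolding geo_convex_def z_def fixpoints_on_def by blast
  have "dist p (T z) \<le> dist p z" if "p \<in> fixpoints_on C T" for p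
    using T \<open>z \<in> C\<close> that unfolding nonexpansive_on_def fixpoints_on_def by (metis (mono_tags) mem_Collect_eq)
  then have "dist p1 (T z) \<le> (1 - l) * dist p1 p2" "dist p2 (T z) \<le> l * dist p1 p2"
    using p dist_geo_comb[OF cat l, of p1 p2] unfolding z_def by (metis dist_commute)+
  moreover have "dist p1 p2 \<le> dist p1 (T z) + dist p2 (T z)"
    using dist_triangle[of p1 p2 "T z"] by (simp add: dist_commute)
  ultimately have "geo_comb l p1 p2 = T z"
    by (intro geo_comb_unique[OF cat l]) (simp_all add: algebra_simps)
  then show "geo_comb l p1 p2 \<in> fixpoints_on C T"
    using \<open>z \<in> C\<close> by (simp add: fixpoints_on_def z_def)
qed

section \<open>Asymptotic centres and demiclosedness\<close>

text \<open>The library's \<open>Limsup\<close> needs a complete lattice; for bounded real sequences the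
  infimum of the eventual upper bounds is the usual lim sup.\<close>
definition limsup_real :: "(nat \<Rightarrow> real) \<Rightarrow> real" where
  "limsup_real s = Inf {M. eventually (\<lambda>n. s n \<le> M) sequentially}"

lemma eventual_upper_bounds_Bseq:
  fixes s :: "nat \<Rightarrow> real"
  assumes "Bseq s"
  shows "{M. eventually (\<lambda>n. s n \<le> M) sequentially} \<noteq> {}"
    and "bdd_below {M. eventually (\<lambda>n. s n \<le> M) sequentially}"
proof -
  obtain K where K: "\<And>n. \<bar>s n\<bar> \<le> K" using assms unfolding Bseq_def by auto
  then show "{M. eventually (\<lambda>n. s n \<le> M) sequentially} \<noteq> {}"
    by (auto intro!: exI[of _ K] simp: abs_le_iff)
  show "bdd_below {M. eventually (\<lambda>n. s n \<le> M) sequentially}"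
  proof (rule bdd_belowI)
    fix M assume "M \<in> {M. eventually (\<lambda>n. s n \<le> M) sequentially}"
    then obtain n where "s n \<le> M" by (auto simp: eventually_sequentially)
    then show "- K \<le> M" using K[of n] by linarith
  qed
qed

lemma limsup_real_le:
  "Bseq s \<Longrightarrow> eventually (\<lambda>n. s n \<le> M) sequentially \<Longrightarrow> limsup_real s \<le> M"
  unfolding limsup_real_def by (rule cInf_lower) (auto intro: eventual_upper_bounds_Bseq)

lemma eventually_le_limsup_real:
  assumes "Bseq s" "0 < e"
  shows "eventually (\<lambda>n. s n \<le> limsup_real s + e) sequentially"
proof -
  have "\<exists>M\<in>{M. eventually (\<lambda>n. s n \<le> M) sequentially}. M < limsup_real s + e"
    using cInf_less_iff[OF eventual_upper_bounds_Bseq[OF assms(1)], of "limsup_real s + e"] assms(2)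
    by (simp add: limsup_real_def)
  then show ?thesis by (auto elim: eventually_mono)
qed

lemma limsup_real_nonneg:
  assumes "Bseq s" "\<And>n. 0 \<le> s n"
  shows "0 \<le> limsup_real s"
  unfolding limsup_real_def
proof (rule cInf_greatest[OF eventual_upper_bounds_Bseq(1)[OF assms(1)]])
  fix M assume "M \<in> {M. eventually (\<lambda>n. s n \<le> M) sequentially}"
  then obtain n where "s n \<le> M" by (auto simp: eventually_sequentially)
  then show "0 \<le> M" using assms(2)[of n] by linarith
qed

lemma limsup_real_lincomb_le:
  assumes "Bseq s" "Bseq t" "Bseq t'" "0 \<le> a" "0 \<le> b"
    and "eventually (\<lambda>n. s n \<le> a * t n + b * t' n + c) sequentially"
  shows "limsup_real s \<le> a * limsup_real t + b * limsup_real t' + c"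
proof (rule field_le_epsilon)
  fix e :: real assume "0 < e"
  define e' where "e' = e / (a + b + 1)"
  have "0 < e'" using \<open>0 < e\<close> assms by (simp add: e'_def)
  have "a * e' + b * e' = (a + b) / (a + b + 1) * e" by (simp add: e'_def add_divide_distrib algebra_simps)
  also have "\<dots> \<le> e" using assms \<open>0 < e\<close> by (intro mult_left_le_one_le) auto
  finally have "a * e' + b * e' \<le> e" .
  have "eventually (\<lambda>n. s n \<le> a * limsup_real t + b * limsup_real t' + c + e) sequentially"
    using assms(6) eventually_le_limsup_real[OF assms(2) \<open>0 < e'\<close>]
      eventually_le_limsup_real[OF assms(3) \<open>0 < e'\<close>]
  proof eventually_elim
    case (elim n)
    have "a * t n \<le> a * (limsup_real t + e')" "b * t' n \<le> b * (limsup_real t' + e')"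
      using elim assms(4,5) by (simp_all add: mult_left_mono)
    then show ?case using elim(1) \<open>a * e' + b * e' \<le> e\<close> by (simp add: algebra_simps)
  qed
  then show "limsup_real s \<le> a * limsup_real t + b * limsup_real t' + c + e"
    by (rule limsup_real_le[OF assms(1)])
qed

lemma limsup_real_le_add:
  assumes "Bseq s" "Bseq t" "eventually (\<lambda>n. s n \<le> t n + c) sequentially"
  shows "limsup_real s \<le> limsup_real t + c"
  using limsup_real_lincomb_le[OF assms(1,2,2), of 1 0 c] assms(3) by simp

definition sq_asymptotic_radius :: "(nat \<Rightarrow> 'a::metric_space) \<Rightarrow> 'a \<Rightarrow> real" where
  "sq_asymptotic_radius w z = limsup_real (\<lambda>n. (dist z (w n))\<^sup>2)"

lemma Bseq_dist_power2:
  assumes "bounded (range w)"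
  shows "Bseq (\<lambda>n. (dist z (w n))\<^sup>2)"
proof -
  obtain B where "\<And>n. dist z (w n) \<le> B" using assms by (auto simp: bounded_any_center[of _ z])
  then show ?thesis by (intro BseqI'[of _ "B\<^sup>2"]) (simp add: power_mono)
qed

lemma sq_asymptotic_radius_nonneg:
  "bounded (range w) \<Longrightarrow> 0 \<le> sq_asymptotic_radius w z"
  unfolding sq_asymptotic_radius_def by (intro limsup_real_nonneg Bseq_dist_power2) auto

lemma sq_asymptotic_radius_midpoint:
  assumes cat: "CAT0 TYPE('a::metric_space)" and w: "bounded (range (w :: nat \<Rightarrow> 'a))"
  shows "sq_asymptotic_radius w (geo_comb (1/2) a b)
    \<le> (sq_asymptotic_radius w a + sq_asymptotic_radius w b) / 2 - (dist a b)\<^sup>2 / 4"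
proof -
  have "sq_asymptotic_radius w (geo_comb (1/2) a b)
      \<le> 1/2 * sq_asymptotic_radius w a + 1/2 * sq_asymptotic_radius w b + - ((dist a b)\<^sup>2 / 4)"
    unfolding sq_asymptotic_radius_def
  proof (intro limsup_real_lincomb_le Bseq_dist_power2[OF w] always_eventually allI)
    show "(dist (geo_comb (1/2) a b) (w n))\<^sup>2
      \<le> 1/2 * (dist a (w n))\<^sup>2 + 1/2 * (dist b (w n))\<^sup>2 + - ((dist a b)\<^sup>2 / 4)" for n
      using dist_geo_comb_power2_le[OF cat, of "1/2" a b "w n"] by simp
  qed auto
  then show ?thesis by (simp add: add_divide_distrib)
qed

lemma sq_asymptotic_radius_le:
  assumes w: "bounded (range w)"
  shows "\<exists>L. \<forall>b. sq_asymptotic_radius w a \<le> sq_asymptotic_radius w b + L * dist a b"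
proof -
  obtain B where B: "\<And>n. dist a (w n) \<le> B" using w by (auto simp: bounded_any_center[of _ a])
  have "sq_asymptotic_radius w a \<le> sq_asymptotic_radius w b + 2 * B * dist a b" for b
    unfolding sq_asymptotic_radius_def
  proof (intro limsup_real_le_add Bseq_dist_power2[OF w] always_eventually allI)
    fix n
    have "dist a (w n) \<le> dist b (w n) + dist a b" by (metis dist_commute dist_triangle)
    then show "(dist a (w n))\<^sup>2 \<le> (dist b (w n))\<^sup>2 + 2 * B * dist a b"
      by (intro power2_le_power2_add B) auto
  qed
  then show ?thesis by blast
qed

lemma asymptotic_center_exists:
  assumes cat: "CAT0 TYPE('a::metric_space)" and C: "complete C" "C \<noteq> {}" "geo_convex C"
    and w: "bounded (range (w :: nat \<Rightarrow> 'a))"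
  shows "\<exists>A\<in>C. \<forall>z\<in>C. sq_asymptotic_radius w A \<le> sq_asymptotic_radius w z"
proof (rule uniformly_convex_minimizer_exists[OF C])
  show "bdd_below (sq_asymptotic_radius w ` C)"
    using sq_asymptotic_radius_nonneg[OF w] by (auto intro: bdd_belowI[of _ 0])
  show "\<exists>L. \<forall>b\<in>C. sq_asymptotic_radius w a \<le> sq_asymptotic_radius w b + L * dist a b" for a
    using sq_asymptotic_radius_le[OF w, of a] by blast
qed (rule sq_asymptotic_radius_midpoint[OF cat w])

lemma asymptotic_center_fixpoint:
  assumes cat: "CAT0 TYPE('a::metric_space)" and C: "geo_convex C" "T ` C \<subseteq> C"
    and T: "nonexpansive_on C T"
    and w: "\<And>n. w n \<in> C" "(\<lambda>n. dist (w n) (T (w n))) \<longlonglongrightarrow> 0" "bounded (range (w :: nat \<Rightarrow> 'a))"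
    and A: "A \<in> C" "\<forall>z\<in>C. sq_asymptotic_radius w A \<le> sq_asymptotic_radius w z"
  shows "T A = A"
proof (rule uniformly_convex_minimizer_unique[OF C(1) sq_asymptotic_radius_midpoint[OF cat w(3)] A])
  show "T A \<in> C" using A(1) C(2) by blast
  obtain B where B: "\<And>n. dist (T A) (w n) \<le> B" using w(3) by (auto simp: bounded_any_center[of _ "T A"])
  show "sq_asymptotic_radius w (T A) \<le> sq_asymptotic_radius w A"
  proof (rule field_le_epsilon)
    fix e :: real assume "0 < e"
    have "(\<lambda>n. 2 * B * dist (w n) (T (w n))) \<longlonglongrightarrow> 0" by (rule tendsto_mult_right_zero[OF w(2)])
    then have "eventually (\<lambda>n. 2 * B * dist (w n) (T (w n)) < e) sequentially"
      using \<open>0 < e\<close> by (rule order_tendstoD)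
    then have "eventually (\<lambda>n. (dist (T A) (w n))\<^sup>2 \<le> (dist A (w n))\<^sup>2 + e) sequentially"
    proof eventually_elim
      case (elim n)
      have "dist (T A) (T (w n)) \<le> dist A (w n)" using T A(1) w(1) by (simp add: nonexpansive_on_def)
      then have "dist (T A) (w n) \<le> dist A (w n) + dist (w n) (T (w n))"
        using dist_triangle[of "T A" "w n" "T (w n)"] by (simp add: dist_commute)
      then have "(dist (T A) (w n))\<^sup>2 \<le> (dist A (w n))\<^sup>2 + 2 * B * dist (w n) (T (w n))"
        by (intro power2_le_power2_add B) auto
      then show ?case using elim by linarith
    qed
    then show "sq_asymptotic_radius w (T A) \<le> sq_asymptotic_radius w A + e"
      unfolding sq_asymptotic_radius_def by (intro limsup_real_le_add Bseq_dist_power2 w(3))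
  qed
qed

text \<open>Projecting \<open>A\<close> onto the part of \<open>C\<close> within distance \<open>\<rho>\<close> of \<open>c\<close>, which eventually
  contains all \<open>w n\<close>, lowers the radius by the squared displacement; minimality of \<open>A\<close>
  therefore keeps \<open>A\<close> in that ball.\<close>
lemma asymptotic_center_dist_le:
  assumes cat: "CAT0 TYPE('a::metric_space)" and C: "complete C" "geo_convex C"
    and w: "\<And>n. w n \<in> C" "(\<lambda>n. dist c (w n)) \<longlonglongrightarrow> m" "bounded (range (w :: nat \<Rightarrow> 'a))"
    and A: "A \<in> C" "\<forall>z\<in>C. sq_asymptotic_radius w A \<le> sq_asymptotic_radius w z"
  shows "dist c A \<le> m"
proof (rule ccontr)
  assume "\<not> dist c A \<le> m"
  define \<rho> where "\<rho> = (dist c A + m) / 2"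
  have \<rho>: "m < \<rho>" "\<rho> < dist c A" using \<open>\<not> dist c A \<le> m\<close> by (auto simp: \<rho>_def)
  define K where "K = C \<inter> cball c \<rho>"
  have K: "complete K" "geo_convex K"
    using C by (auto simp: K_def intro: complete_Int_closed geo_convex_Int geo_convex_cball[OF cat])
  have ev_K: "eventually (\<lambda>n. w n \<in> K) sequentially"
    using order_tendstoD(2)[OF w(2) \<rho>(1)] w(1) by (auto simp: K_def elim: eventually_mono)
  then have "K \<noteq> {}" by (auto dest: eventually_happens')
  define A' where "A' = metric_proj K A"
  have A': "A' \<in> K" "\<And>z. z \<in> K \<Longrightarrow> dist A A' \<le> dist A z"
    using metric_proj[OF cat K(1) \<open>K \<noteq> {}\<close> K(2)] by (auto simp: A'_def)
  have "eventually (\<lambda>n. (dist A' (w n))\<^sup>2 \<le> (dist A (w n))\<^sup>2 + - (dist A A')\<^sup>2) sequentially"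
    using ev_K by eventually_elim (use nearest_point_pythagoras[OF cat K(2) A'] in force)
  then have "sq_asymptotic_radius w A' \<le> sq_asymptotic_radius w A - (dist A A')\<^sup>2"
    unfolding sq_asymptotic_radius_def using limsup_real_le_add[OF Bseq_dist_power2 Bseq_dist_power2]
    w(3) by fastforce
  moreover have "sq_asymptotic_radius w A \<le> sq_asymptotic_radius w A'"
    using A(2) A'(1) by (simp add: K_def)
  ultimately have "(dist A A')\<^sup>2 \<le> 0" by linarith
  then have "A = A'" by simp
  then show False using A'(1) \<rho>(2) by (simp add: K_def)
qed

lemma fixpoint_dist_le_of_approx_fixpoints:
  fixes C :: "'a::metric_space set" and w :: "nat \<Rightarrow> 'a"
  assumes cat: "CAT0 TYPE('a)" and C: "complete C" "geo_convex C" "T ` C \<subseteq> C"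
    and T: "nonexpansive_on C T"
    and w: "\<And>n. w n \<in> C" "(\<lambda>n. dist (w n) (T (w n))) \<longlonglongrightarrow> 0" "(\<lambda>n. dist c (w n)) \<longlonglongrightarrow> m"
  shows "\<exists>q\<in>fixpoints_on C T. dist c q \<le> (m::real)"
proof -
  obtain B where "\<And>n. norm (dist c (w n)) \<le> B"
    using convergent_imp_Bseq[OF convergentI[OF w(3)]] by (auto simp: Bseq_def)
  then have bdd: "bounded (range w)" by (auto simp: bounded_any_center[of _ c])
  obtain A where A: "A \<in> C" "\<forall>z\<in>C. sq_asymptotic_radius w A \<le> sq_asymptotic_radius w z"
    using asymptotic_center_exists[OF cat C(1) _ C(2) bdd] w(1) by blast
  have "T A = A" by (rule asymptotic_center_fixpoint[OF cat C(2,3) T w(1,2) bdd A])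
  moreover have "dist c A \<le> m" by (rule asymptotic_center_dist_le[OF cat C(1,2) w(1,3) bdd A])
  ultimately show ?thesis using A(1) by (auto simp: fixpoints_on_def)
qed

section \<open>A pair of recursive inequalities\<close>

lemma eventually_le_of_decrements:
  fixes v \<gamma> :: "nat \<Rightarrow> real"
  assumes div: "\<not> summable \<gamma>" and \<gamma>: "\<And>n. 0 \<le> \<gamma> n" and v: "\<And>n. 0 \<le> v n" and \<kappa>: "0 < \<kappa>"
    and mono: "\<And>n. N \<le> n \<Longrightarrow> v (Suc n) \<le> v n"
    and dec: "\<And>n. N \<le> n \<Longrightarrow> \<epsilon> < v (Suc n) \<Longrightarrow> \<kappa> * \<gamma> n \<le> v n - v (Suc n)"
  shows "eventually (\<lambda>n. v n \<le> \<epsilon>) sequentially"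
proof (rule ccontr)
  assume not_ev: "\<not> eventually (\<lambda>n. v n \<le> \<epsilon>) sequentially"
  have large: "\<epsilon> < v n" if "N \<le> n" for n
  proof (rule ccontr)
    assume small: "\<not> \<epsilon> < v n"
    have "v m \<le> \<epsilon>" if "n \<le> m" for m
      using that
    proof (induction m rule: dec_induct)
      case base
      then show ?case using small by simp
    next
      case (step m)
      then show ?case using mono[of m] \<open>N \<le> n\<close> by linarith
    qed
    then show False using not_ev by (auto simp: eventually_sequentially)
  qed
  have telescope: "\<kappa> * (\<Sum>k<m. \<gamma> (k + N)) \<le> v N - v (m + N)" for m
  proof (induction m)
    case (Suc m)
    then show ?case using dec[of "m + N"] large[of "Suc (m + N)"] by (simp add: algebra_simps)
  qed simp
  have "(\<Sum>k<m. \<gamma> (k + N)) \<le> v N / \<kappa>" for m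
    using telescope[of m] v[of "m + N"] \<kappa> by (simp add: field_simps)
  then have "summable (\<lambda>k. \<gamma> (k + N))" using \<gamma> by (intro summableI_nonneg_bounded) auto
  then show False using div by (simp add: summable_iff_shift)
qed

lemma truncated_recursive_step:
  fixes s s' \<gamma> \<delta> \<eta> \<rho> \<epsilon> \<theta> :: real
  defines "v \<equiv> max (s - \<epsilon>) 0" and "v' \<equiv> max (s' - \<epsilon>) 0" and "\<kappa> \<equiv> min \<epsilon> (\<theta> / 2)"
  assumes \<gamma>: "\<gamma> \<in> {0..1}" and \<epsilon>: "0 < \<epsilon>" and \<theta>: "0 < \<theta>"
    and rec1: "s' \<le> (1 - \<gamma>) * s + \<gamma> * \<delta>" and rec2: "s' \<le> s - \<eta> + \<rho>"
    and \<eta>\<delta>: "\<eta> < \<theta> \<Longrightarrow> \<delta> < \<epsilon>" and \<rho>: "\<rho> < \<theta> / 2"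
  shows "v' \<le> v" and "\<epsilon> < v' \<Longrightarrow> \<kappa> * \<gamma> \<le> v - v'"
proof -
  have "v' \<le> v \<and> (\<epsilon> < v' \<longrightarrow> \<kappa> * \<gamma> \<le> v - v')"
  proof (cases "\<eta> < \<theta>")
    case True
    then have "\<gamma> * \<delta> \<le> \<gamma> * \<epsilon>" using \<eta>\<delta> \<gamma> by (simp add: mult_left_mono)
    then have "s' - \<epsilon> \<le> (1 - \<gamma>) * (s - \<epsilon>)" using rec1 by (simp add: algebra_simps)
    also have "\<dots> \<le> (1 - \<gamma>) * v" using \<gamma> by (intro mult_left_mono) (auto simp: v_def)
    finally have "s' - \<epsilon> \<le> v - \<gamma> * v" by (simp add: algebra_simps)
    moreover have "0 \<le> v - \<gamma> * v" using \<gamma> mult_left_le_one_le[of v \<gamma>] by (simp add: v_def)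
    ultimately have V: "v' \<le> v - \<gamma> * v" by (simp add: v'_def)
    have "0 \<le> \<gamma> * v" using \<gamma> by (simp add: v_def)
    moreover have "\<kappa> * \<gamma> \<le> \<gamma> * v" if "\<epsilon> < v'"
    proof -
      have "\<kappa> \<le> v" using that V \<open>0 \<le> \<gamma> * v\<close> by (simp add: \<kappa>_def)
      then show ?thesis using \<gamma> mult_right_mono[of \<kappa> v \<gamma>] by (simp add: mult.commute)
    qed
    ultimately show ?thesis using V by auto
  next
    case False
    then have "s' \<le> s - \<theta> / 2" using rec2 \<rho> by simp
    moreover have "\<kappa> * \<gamma> \<le> \<kappa>"
      by (rule mult_right_le_one_le) (use \<gamma> \<epsilon> \<theta> in \<open>auto simp: \<kappa>_def\<close>)
    ultimately show ?thesis using \<theta> \<epsilon> by (auto simp: v_def v'_def \<kappa>_def split: split_max)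
  qed
  then show "v' \<le> v" and "\<epsilon> < v' \<Longrightarrow> \<kappa> * \<gamma> \<le> v - v'" by auto
qed

text \<open>As long as \<open>max (s n - \<epsilon>) 0\<close> exceeds \<open>\<epsilon>\<close> it decreases by at least
  \<open>min \<epsilon> (\<theta> / 2) * \<gamma> n\<close>, which the divergence of \<open>\<Sum> \<gamma>\<close> does not allow forever.\<close>
lemma tendsto_zero_of_recursive_ineqs:
  fixes s \<gamma> \<delta> \<eta> \<rho> :: "nat \<Rightarrow> real"
  assumes s: "\<And>n. 0 \<le> s n" and \<gamma>: "\<And>n. \<gamma> n \<in> {0..1}" and div: "\<not> summable \<gamma>"
    and rec1: "\<And>n. s (Suc n) \<le> (1 - \<gamma> n) * s n + \<gamma> n * \<delta> n"
    and rec2: "\<And>n. s (Suc n) \<le> s n - \<eta> n + \<rho> n" and \<rho>: "\<rho> \<longlonglongrightarrow> 0"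
    and \<eta>\<delta>: "\<And>\<epsilon>. 0 < \<epsilon> \<Longrightarrow> \<exists>\<theta>>0. \<exists>N. \<forall>n\<ge>N. \<eta> n < \<theta> \<longrightarrow> \<delta> n < \<epsilon>"
  shows "s \<longlonglongrightarrow> 0"
proof -
  have small: "eventually (\<lambda>n. s n \<le> 2 * \<epsilon>) sequentially" if \<epsilon>: "0 < \<epsilon>" for \<epsilon>
  proof -
    obtain \<theta> N0 where \<theta>: "0 < \<theta>" and N0: "\<And>n. N0 \<le> n \<Longrightarrow> \<eta> n < \<theta> \<Longrightarrow> \<delta> n < \<epsilon>"
      using \<eta>\<delta>[OF \<epsilon>] by blast
    obtain N1 where N1: "\<And>n. N1 \<le> n \<Longrightarrow> \<rho> n < \<theta> / 2"
      using order_tendstoD(2)[OF \<rho>, of "\<theta> / 2"] \<theta> by (auto simp: eventually_sequentially)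
    note step = truncated_recursive_step[OF \<gamma> \<epsilon> \<theta> rec1 rec2 N0 N1]
    have "eventually (\<lambda>n. max (s n - \<epsilon>) 0 \<le> \<epsilon>) sequentially"
      by (rule eventually_le_of_decrements[OF div, of _ "min \<epsilon> (\<theta> / 2)" "max N0 N1"])
        (use \<gamma> step \<epsilon> \<theta> in auto)
    then show ?thesis by eventually_elim simp
  qed
  show ?thesis
  proof (rule order_tendstoI)
    fix a :: real assume "a < 0"
    then show "eventually (\<lambda>n. a < s n) sequentially"
      using s by (intro always_eventually allI) (meson less_le_trans)
  next
    fix a :: real assume "0 < a"
    then have "eventually (\<lambda>n. s n \<le> 2 * (a / 3)) sequentially" by (intro small) simp
    then show "eventually (\<lambda>n. s n < a) sequentially"
      by eventually_elim (use \<open>0 < a\<close> in linarith)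
  qed
qed

lemma tendsto_zero_of_recursive_ineqs_summable_error:
  fixes s \<gamma> \<delta> c \<eta> \<rho> :: "nat \<Rightarrow> real"
  assumes s: "\<And>n. 0 \<le> s n" and \<gamma>: "\<And>n. \<gamma> n \<in> {0..1}" and div: "\<not> summable \<gamma>"
    and rec1: "\<And>n. s (Suc n) \<le> (1 - \<gamma> n) * s n + \<gamma> n * \<delta> n + c n"
    and c: "\<And>n. 0 \<le> c n" "summable c"
    and rec2: "\<And>n. s (Suc n) \<le> s n - \<eta> n + \<rho> n" and \<rho>: "\<rho> \<longlonglongrightarrow> 0"
    and \<eta>\<delta>: "\<And>\<epsilon>. 0 < \<epsilon> \<Longrightarrow> \<exists>\<theta>>0. \<exists>N. \<forall>n\<ge>N. \<eta> n < \<theta> \<longrightarrow> \<delta> n < \<epsilon>"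
  shows "s \<longlonglongrightarrow> 0"
proof -
  txt \<open>The tails \<open>r\<close> of \<open>\<Sum> c\<close> are absorbed into \<open>s\<close>.\<close>
  define r where "r n = suminf c - (\<Sum>k<n. c k)" for n
  have r_nonneg: "0 \<le> r n" for n using sum_le_suminf[OF c(2)] c(1) by (simp add: r_def)
  have r_Suc: "r (Suc n) = r n - c n" for n by (simp add: r_def)
  have "(\<lambda>n. suminf c - (\<Sum>k<n. c k)) \<longlonglongrightarrow> suminf c - suminf c"
    by (intro tendsto_intros summable_LIMSEQ[OF c(2)])
  then have r_lim: "r \<longlonglongrightarrow> 0" by (simp add: r_def[abs_def])
  have lim: "(\<lambda>n. s n + r n) \<longlonglongrightarrow> 0"
  proof (rule tendsto_zero_of_recursive_ineqs[OF _ \<gamma> div _ _ \<rho>])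
    show "0 \<le> s n + r n" for n using s r_nonneg by (simp add: add_nonneg_nonneg)
    show "s (Suc n) + r (Suc n) \<le> (1 - \<gamma> n) * (s n + r n) + \<gamma> n * (\<delta> n + r n)" for n
      using rec1[of n] by (simp add: r_Suc algebra_simps)
    show "s (Suc n) + r (Suc n) \<le> s n + r n - \<eta> n + \<rho> n" for n
      using rec2[of n] c(1)[of n] by (simp add: r_Suc)
    fix \<epsilon> :: real assume "0 < \<epsilon>"
    then obtain \<theta> N where \<theta>: "0 < \<theta>" "\<forall>n\<ge>N. \<eta> n < \<theta> \<longrightarrow> \<delta> n < \<epsilon> / 2"
      using \<eta>\<delta>[of "\<epsilon> / 2"] by auto
    obtain N' where "\<forall>n\<ge>N'. r n < \<epsilon> / 2"
      using order_tendstoD(2)[OF r_lim, of "\<epsilon> / 2"] \<open>0 < \<epsilon>\<close> by (auto simp: eventually_sequentially)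
    then have "\<forall>n\<ge>max N N'. \<eta> n < \<theta> \<longrightarrow> \<delta> n + r n < \<epsilon>" using \<theta>(2) by fastforce
    then show "\<exists>\<theta>>0. \<exists>N. \<forall>n\<ge>N. \<eta> n < \<theta> \<longrightarrow> \<delta> n + r n < \<epsilon>" using \<theta>(1) by blast
  qed
  have "eventually (\<lambda>n. 0 \<le> s n) sequentially" "eventually (\<lambda>n. s n \<le> s n + r n) sequentially"
    using s r_nonneg by simp_all
  then show ?thesis using real_tendsto_sandwich[OF _ _ tendsto_const lim] by blast
qed

section \<open>The iteration\<close>

locale halpern_mann_iteration =
  fixes C :: "'a::metric_space set" and T :: "'a \<Rightarrow> 'a" and ob :: 'a
    and \<alpha> \<beta> :: "nat \<Rightarrow> real" and u x y :: "nat \<Rightarrow> 'a"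
  assumes hadamard: "hadamard_space TYPE('a)"
    and C: "C \<noteq> {}" "closed C" "geo_convex C"
    and T: "T ` C \<subseteq> C" "nonexpansive_on C T" "fixpoints_on C T \<noteq> {}"
    and \<alpha>: "\<And>n. \<alpha> n \<in> {0<..<1}" and \<beta>: "\<And>n. \<beta> n \<in> {0<..<1}"
    and x0: "x 0 \<in> C"
    and y: "\<And>n. y n = geo_comb (\<alpha> n) (u n) (T (x n))"
    and x_Suc: "\<And>n. x (Suc n) = geo_comb (1 - \<beta> n) (x n) (metric_proj C (y n))"
    and \<alpha>_lim: "\<alpha> \<longlonglongrightarrow> 0" and \<alpha>_div: "\<not> summable \<alpha>"
    and \<beta>_liminf: "0 < liminf (\<lambda>n. ereal (\<beta> n))" and \<beta>_limsup: "limsup (\<lambda>n. ereal (\<beta> n)) < 1"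
    and u_sum: "summable (\<lambda>n. \<alpha> n * dist (u n) ob)"
begin

lemma cat: "CAT0 TYPE('a)"
  using hadamard by (simp add: hadamard_space_def)

lemma closed_imp_complete: "closed (K::'a set) \<Longrightarrow> complete K"
  using hadamard complete_closed_subset[of K UNIV] by (simp add: hadamard_space_def)

lemma \<alpha>_01: "\<alpha> n \<in> {0..1}" and \<beta>_01: "1 - \<beta> n \<in> {0..1}"
  using \<alpha>[of n] \<beta>[of n] by auto

abbreviation P :: "'a \<Rightarrow> 'a" where "P \<equiv> metric_proj C"

lemma P_in_C: "P z \<in> C"
  using metric_proj(1)[OF cat closed_imp_complete[OF C(2)] C(1,3)] .

lemma dist_P_le: "c \<in> C \<Longrightarrow> dist (P z) c \<le> dist z c"
  using dist_metric_proj_le[OF cat closed_imp_complete[OF C(2)] C(1,3)] .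

lemma x_in_C: "x n \<in> C"
proof (induction n)
  case (Suc n)
  then show ?case using C(3) P_in_C \<beta>_01 by (simp add: x_Suc geo_convex_def)
qed (rule x0)

lemma dist_T_le: "a \<in> C \<Longrightarrow> b \<in> C \<Longrightarrow> dist (T a) (T b) \<le> dist a b"
  using T(2) by (simp add: nonexpansive_on_def)

definition q :: 'a where "q = metric_proj (fixpoints_on C T) ob"

lemma q: "q \<in> C" "T q = q" "\<And>p. p \<in> fixpoints_on C T \<Longrightarrow> dist ob q \<le> dist ob p"
proof -
  have "complete (fixpoints_on C T)" by (rule closed_imp_complete[OF closed_fixpoints_on[OF C(2) T(2)]])
  note proj = metric_proj[OF cat this T(3) geo_convex_fixpoints_on[OF cat C(3) T(2)]]
  show "q \<in> C" "T q = q" using proj(1) by (simp_all add: q_def fixpoints_on_def)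
  show "dist ob q \<le> dist ob p" if "p \<in> fixpoints_on C T" for p
    using proj(2)[OF that] by (simp add: q_def)
qed

definition err :: "nat \<Rightarrow> real" where "err n = \<alpha> n * dist (u n) ob"

lemma err_nonneg: "0 \<le> err n"
  using \<alpha>[of n] by (simp add: err_def)

lemma err_summable: "summable err"
  using u_sum by (simp add: err_def[abs_def])

lemma err_le_suminf: "err n \<le> suminf err"
  using sum_le_suminf[OF err_summable, of "{n}"] err_nonneg by simp

lemma dist_y_q_le: "dist (y n) q \<le> err n + \<alpha> n * dist ob q + (1 - \<alpha> n) * dist (x n) q"
proof -
  have "dist (y n) q \<le> \<alpha> n * dist (u n) q + (1 - \<alpha> n) * dist (T (x n)) q"
    unfolding y by (rule dist_geo_comb_le[OF cat \<alpha>_01])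
  also have "\<dots> \<le> \<alpha> n * (dist (u n) ob + dist ob q) + (1 - \<alpha> n) * dist (x n) q"
    using dist_T_le[OF x_in_C q(1), of n] q(2) \<alpha>[of n] dist_triangle[of "u n" q ob]
    by (intro add_mono mult_left_mono) auto
  finally show ?thesis by (simp add: err_def algebra_simps)
qed

definition R :: real where "R = max (dist (x 0) q) (dist ob q) + suminf err"

lemma dist_x_q_le: "dist (x n) q \<le> R"
proof -
  have "dist (x n) q \<le> max (dist (x 0) q) (dist ob q) + (\<Sum>k<n. err k)"
  proof (induction n)
    case (Suc n)
    let ?M = "max (dist (x 0) q) (dist ob q) + (\<Sum>k<n. err k)"
    have "dist (x (Suc n)) q \<le> (1 - \<beta> n) * dist (x n) q + \<beta> n * dist (P (y n)) q"
      unfolding x_Suc using dist_geo_comb_le[OF cat \<beta>_01] by simp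
    also have "\<dots> \<le> (1 - \<beta> n) * ?M + \<beta> n * (err n + ?M)"
    proof -
      have "\<alpha> n * dist ob q + (1 - \<alpha> n) * dist (x n) q \<le> \<alpha> n * ?M + (1 - \<alpha> n) * ?M"
        using Suc.IH \<alpha>[of n] sum_nonneg[of "{..<n}" err] err_nonneg
        by (intro add_mono mult_left_mono) auto
      moreover have "\<alpha> n * ?M + (1 - \<alpha> n) * ?M = ?M" by (simp add: algebra_simps)
      ultimately have "dist (P (y n)) q \<le> err n + ?M"
        using dist_P_le[OF q(1), of "y n"] dist_y_q_le[of n] by linarith
      then show ?thesis
        using Suc.IH \<beta>[of n] by (intro add_mono mult_left_mono) auto
    qed
    also have "\<dots> \<le> ?M + err n" using \<beta>[of n] err_nonneg[of n] by (simp add: algebra_simps mult_left_le_one_le)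
    finally show ?case by simp
  qed simp
  also have "\<dots> \<le> R" using sum_le_suminf[OF err_summable] err_nonneg by (simp add: R_def)
  finally show ?thesis .
qed

text \<open>With the anchor \<open>ob\<close> in place of \<open>u n\<close>, the CN inequality produces the term \<open>\<delta>\<close>,
  which is controlled because \<open>q\<close> is the fixed point nearest to \<open>ob\<close>.\<close>
definition y_ob :: "nat \<Rightarrow> 'a" where "y_ob n = geo_comb (\<alpha> n) ob (T (x n))"

lemma dist_y_y_ob: "dist (y n) (y_ob n) \<le> err n"
proof -
  have "dist (y n) (y_ob n) \<le> (1 - (1 - \<alpha> n)) * dist (u n) ob"
    unfolding y y_ob_def geo_comb_commute[of "\<alpha> n"]
    by (rule dist_geo_comb_geo_comb_le[OF cat]) (use \<alpha>[of n] in auto)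
  then show ?thesis by (simp add: err_def)
qed

lemma dist_y_q_le_bound: "dist (y n) q \<le> R + suminf err"
proof -
  have "dist ob q \<le> R" "dist (x n) q \<le> R"
    using dist_x_q_le suminf_nonneg[OF err_summable err_nonneg] by (auto simp: R_def)
  then have "\<alpha> n * dist ob q + (1 - \<alpha> n) * dist (x n) q \<le> \<alpha> n * R + (1 - \<alpha> n) * R"
    using \<alpha>[of n] by (intro add_mono mult_left_mono) auto
  then show ?thesis using dist_y_q_le[of n] err_le_suminf[of n] by (simp add: algebra_simps)
qed

definition s :: "nat \<Rightarrow> real" where "s n = (dist (x n) q)\<^sup>2"
definition \<gamma> :: "nat \<Rightarrow> real" where "\<gamma> n = \<alpha> n * \<beta> n"
definition \<delta> :: "nat \<Rightarrow> real" where "\<delta> n = (dist ob q)\<^sup>2 - (1 - \<alpha> n) * (dist ob (T (x n)))\<^sup>2"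
definition \<eta> :: "nat \<Rightarrow> real" where "\<eta> n = \<beta> n * (1 - \<beta> n) * (dist (x n) (P (y n)))\<^sup>2"
definition pert :: "nat \<Rightarrow> real" where "pert n = 2 * (R + suminf err) * err n"

lemma sq_dist_P_y_q_le: "(dist (P (y n)) q)\<^sup>2 \<le> (1 - \<alpha> n) * s n + \<alpha> n * \<delta> n + pert n"
proof -
  have "(dist (P (y n)) q)\<^sup>2 \<le> (dist (y n) q)\<^sup>2" using dist_P_le[OF q(1)] by (simp add: power_mono)
  also have "\<dots> \<le> (dist (y_ob n) q)\<^sup>2 + pert n"
  proof -
    have "dist (y n) q \<le> dist (y_ob n) q + err n" using dist_y_y_ob[of n] dist_triangle[of "y n" q "y_ob n"] by linarith
    then show ?thesis unfolding pert_def
      by (intro power2_le_power2_add dist_y_q_le_bound err_nonneg) auto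
  qed
  also have "(dist (y_ob n) q)\<^sup>2 \<le> (1 - \<alpha> n) * s n + \<alpha> n * \<delta> n"
  proof -
    have "(dist (T (x n)) q)\<^sup>2 \<le> s n"
      using dist_T_le[OF x_in_C q(1), of n] q(2) by (simp add: s_def power_mono)
    then have "(1 - \<alpha> n) * (dist (T (x n)) q)\<^sup>2 \<le> (1 - \<alpha> n) * s n"
      using \<alpha>[of n] by (intro mult_left_mono) auto
    then show ?thesis
      using dist_geo_comb_power2_le[OF cat \<alpha>_01[of n], of ob "T (x n)" q] by (simp add: y_ob_def \<delta>_def algebra_simps)
  qed
  finally show ?thesis by simp
qed

lemma s_Suc_le: "s (Suc n) \<le> (1 - \<gamma> n) * s n + \<gamma> n * \<delta> n + \<beta> n * pert n - \<eta> n"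
proof -
  have "s (Suc n) \<le> (1 - \<beta> n) * s n + \<beta> n * (dist (P (y n)) q)\<^sup>2 - \<eta> n"
    using dist_geo_comb_power2_le[OF cat \<beta>_01[of n], of "x n" "P (y n)" q]
    by (simp add: s_def \<eta>_def x_Suc algebra_simps)
  also have "\<beta> n * (dist (P (y n)) q)\<^sup>2 \<le> \<beta> n * ((1 - \<alpha> n) * s n + \<alpha> n * \<delta> n + pert n)"
    using sq_dist_P_y_q_le \<beta>[of n] by (intro mult_left_mono) auto
  finally show ?thesis by (simp add: \<gamma>_def algebra_simps)
qed

lemma \<gamma>_01: "\<gamma> n \<in> {0..1}"
  using \<alpha>[of n] \<beta>[of n] by (auto simp: \<gamma>_def mult_le_one)

lemma \<eta>_nonneg: "0 \<le> \<eta> n"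
  using \<beta>[of n] by (simp add: \<eta>_def)

lemma pert_nonneg: "0 \<le> pert n"
proof -
  have "0 \<le> R + suminf err" using dist_y_q_le_bound[of n] zero_le_dist[of "y n" q] by linarith
  then show ?thesis using err_nonneg[of n] by (simp add: pert_def)
qed

lemma pert_summable: "summable pert"
  unfolding pert_def by (rule summable_mult[OF err_summable])

lemma s_Suc_le_pert: "s (Suc n) \<le> (1 - \<gamma> n) * s n + \<gamma> n * \<delta> n + pert n"
  using s_Suc_le[of n] \<eta>_nonneg[of n] pert_nonneg[of n] \<beta>[of n]
    mult_left_le_one_le[of "pert n" "\<beta> n"] by simp

lemma dist_ob_T_x_le: "dist ob (T (x n)) \<le> dist ob q + R"
  using dist_triangle[of ob "T (x n)" q] dist_T_le[OF x_in_C q(1), of n] q(2) dist_x_q_le[of n]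
  by (simp add: dist_commute)

definition \<rho> :: "nat \<Rightarrow> real" where "\<rho> n = \<gamma> n * \<bar>\<delta> n\<bar> + pert n"

lemma s_Suc_le_\<rho>: "s (Suc n) \<le> s n - \<eta> n + \<rho> n"
proof -
  have "\<gamma> n * \<delta> n \<le> \<gamma> n * \<bar>\<delta> n\<bar>" "0 \<le> \<gamma> n * s n" "\<beta> n * pert n \<le> pert n"
    using \<gamma>_01[of n] \<beta>[of n] pert_nonneg[of n] by (auto simp: s_def mult_left_mono mult_left_le_one_le)
  then show ?thesis using s_Suc_le[of n] by (simp add: \<rho>_def algebra_simps)
qed

lemma \<rho>_lim: "\<rho> \<longlonglongrightarrow> 0"
proof (rule real_tendsto_sandwich)
  define D where "D = (dist ob q)\<^sup>2 + (dist ob q + R)\<^sup>2"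
  have \<delta>_le: "\<bar>\<delta> n\<bar> \<le> D" for n
  proof -
    have "(dist ob (T (x n)))\<^sup>2 \<le> (dist ob q + R)\<^sup>2" using dist_ob_T_x_le by (simp add: power_mono)
    moreover have "(1 - \<alpha> n) * (dist ob (T (x n)))\<^sup>2 \<le> (dist ob (T (x n)))\<^sup>2" "0 \<le> 1 - \<alpha> n"
      using \<alpha>[of n] by (auto simp: mult_left_le_one_le)
    ultimately show ?thesis unfolding \<delta>_def D_def abs_le_iff
      by (smt (verit) zero_le_power2 mult_nonneg_nonneg)
  qed
  have "\<gamma> n \<le> \<alpha> n" for n using \<alpha>[of n] \<beta>[of n] by (simp add: \<gamma>_def mult_left_le_one_le)
  then have "\<rho> n \<le> \<alpha> n * D + pert n" for n
    using mult_mono[OF _ \<delta>_le, of "\<gamma> n" "\<alpha> n" n] \<alpha>[of n] by (simp add: \<rho>_def)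
  then show "eventually (\<lambda>n. \<rho> n \<le> \<alpha> n * D + pert n) sequentially" by simp
  show "eventually (\<lambda>n. 0 \<le> \<rho> n) sequentially" using \<gamma>_01 pert_nonneg by (simp add: \<rho>_def)
  show "(\<lambda>n. \<alpha> n * D + pert n) \<longlonglongrightarrow> 0"
    using tendsto_add[OF tendsto_mult_left_zero[OF \<alpha>_lim] summable_LIMSEQ_zero[OF pert_summable]]
    by simp
qed simp

lemma \<beta>_eventually_bounds:
  obtains a b where "0 < a" "b < 1" "eventually (\<lambda>n. a < \<beta> n \<and> \<beta> n < b) sequentially"
proof -
  obtain a where a: "0 < ereal a" "ereal a < liminf (\<lambda>n. ereal (\<beta> n))"
    using ereal_dense2[OF \<beta>_liminf] by blast
  obtain b where b: "limsup (\<lambda>n. ereal (\<beta> n)) < ereal b" "ereal b < 1"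
    using ereal_dense2[OF \<beta>_limsup] by blast
  have "eventually (\<lambda>n. a < \<beta> n \<and> \<beta> n < b) sequentially"
    using less_LiminfD[OF a(2)] Limsup_lessD[OF b(1)] by eventually_elim simp
  then show ?thesis using that a(1) b(2) by simp
qed

lemma \<gamma>_not_summable: "\<not> summable \<gamma>"
proof
  assume "summable \<gamma>"
  obtain a b where a: "0 < a" and ev: "eventually (\<lambda>n. a < \<beta> n \<and> \<beta> n < b) sequentially"
    by (rule \<beta>_eventually_bounds)
  have "eventually (\<lambda>n. norm (\<alpha> n) \<le> \<gamma> n / a) sequentially"
    using ev
  proof eventually_elim
    case (elim n)
    then have "\<alpha> n * a \<le> \<gamma> n" using \<alpha>[of n] by (simp add: \<gamma>_def mult_left_mono)
    then show ?case using \<alpha>[of n] a by (simp add: field_simps)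
  qed
  then have "summable \<alpha>" by (rule summable_comparison_test_ev) (rule summable_divide[OF \<open>summable \<gamma>\<close>])
  then show False using \<alpha>_div by simp
qed

lemma dist_P_y_T_x_le: "dist (P (y n)) (T (x n)) \<le> err n + \<alpha> n * (dist ob q + R)"
proof -
  have "dist (P (y n)) (T (x n)) \<le> dist (y n) (T (x n))" by (rule dist_P_le[OF T(1)[THEN subsetD, OF imageI[OF x_in_C]]])
  also have "\<dots> = \<alpha> n * dist (u n) (T (x n))" unfolding y by (rule dist_geo_comb(2)[OF cat \<alpha>_01])
  also have "\<dots> \<le> \<alpha> n * (dist (u n) ob + (dist ob q + R))"
    using dist_triangle[of "u n" "T (x n)" ob] dist_ob_T_x_le[of n] \<alpha>[of n]
    by (intro mult_left_mono) auto
  finally show ?thesis by (simp add: err_def algebra_simps)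
qed

lemma dist_x_T_x_along:
  assumes N: "filterlim N sequentially sequentially" and \<eta>_lim: "(\<lambda>j. \<eta> (N j)) \<longlonglongrightarrow> 0"
  shows "(\<lambda>j. dist (x (N j)) (T (x (N j)))) \<longlonglongrightarrow> 0"
proof -
  obtain a b where ab: "0 < a" "b < 1" and ev: "eventually (\<lambda>n. a < \<beta> n \<and> \<beta> n < b) sequentially"
    by (rule \<beta>_eventually_bounds)
  define \<kappa> where "\<kappa> = a * (1 - b)"
  have "0 < \<kappa>" using ab by (simp add: \<kappa>_def)
  have "eventually (\<lambda>n. \<kappa> \<le> \<beta> n * (1 - \<beta> n)) sequentially"
    using ev by eventually_elim (use ab in \<open>auto simp: \<kappa>_def intro!: mult_mono\<close>)
  then have ev_N: "eventually (\<lambda>j. \<kappa> \<le> \<beta> (N j) * (1 - \<beta> (N j))) sequentially"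
    by (rule filterlim_iff[THEN iffD1, OF N, rule_format])
  have "(\<lambda>j. (dist (x (N j)) (P (y (N j))))\<^sup>2) \<longlonglongrightarrow> 0"
  proof (rule real_tendsto_sandwich[OF _ _ tendsto_const])
    show "eventually (\<lambda>j. (dist (x (N j)) (P (y (N j))))\<^sup>2 \<le> \<eta> (N j) / \<kappa>) sequentially"
      using ev_N
    proof eventually_elim
      case (elim j)
      then have "\<kappa> * (dist (x (N j)) (P (y (N j))))\<^sup>2 \<le> \<eta> (N j)"
        unfolding \<eta>_def by (intro mult_right_mono) auto
      then show ?case using \<open>0 < \<kappa>\<close> by (simp add: field_simps)
    qed
    show "(\<lambda>j. \<eta> (N j) / \<kappa>) \<longlonglongrightarrow> 0" using tendsto_divide_zero[OF \<eta>_lim] .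
  qed simp
  then have "(\<lambda>j. dist (x (N j)) (P (y (N j)))) \<longlonglongrightarrow> 0"
    using tendsto_real_sqrt by fastforce
  moreover have "(\<lambda>j. err (N j) + \<alpha> (N j) * (dist ob q + R)) \<longlonglongrightarrow> 0"
    using filterlim_compose[OF summable_LIMSEQ_zero[OF err_summable] N]
      filterlim_compose[OF \<alpha>_lim N]
    by (auto intro: tendsto_add_zero tendsto_mult_left_zero)
  ultimately have lim: "(\<lambda>j. dist (x (N j)) (P (y (N j))) + (err (N j) + \<alpha> (N j) * (dist ob q + R)))
      \<longlonglongrightarrow> 0"
    by (rule tendsto_add_zero)
  have "dist (x n) (T (x n)) \<le> dist (x n) (P (y n)) + (err n + \<alpha> n * (dist ob q + R))" for n
    using dist_triangle[of "x n" "T (x n)" "P (y n)"] dist_P_y_T_x_le[of n] by linarith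
  then show ?thesis by (intro Lim_null_comparison[OF _ lim] always_eventually) simp
qed

lemma \<delta>_along:
  assumes N: "filterlim N sequentially sequentially" and \<eta>_lim: "(\<lambda>j. \<eta> (N j)) \<longlonglongrightarrow> 0"
    and m: "(\<lambda>j. dist ob (x (N j))) \<longlonglongrightarrow> m"
  shows "(\<lambda>j. \<delta> (N j)) \<longlonglongrightarrow> (dist ob q)\<^sup>2 - m\<^sup>2" and "dist ob q \<le> m"
proof -
  note approx = dist_x_T_x_along[OF N \<eta>_lim]
  have "(\<lambda>j. dist ob (T (x (N j))) - dist ob (x (N j))) \<longlonglongrightarrow> 0"
  proof (rule Lim_null_comparison[OF always_eventually approx], intro allI)
    show "norm (dist ob (T (x (N j))) - dist ob (x (N j))) \<le> dist (x (N j)) (T (x (N j)))" for j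
      using dist_triangle[of ob "T (x (N j))" "x (N j)"] dist_triangle[of ob "x (N j)" "T (x (N j))"]
      by (simp add: abs_le_iff dist_commute)
  qed
  from tendsto_add[OF this m] have "(\<lambda>j. dist ob (T (x (N j)))) \<longlonglongrightarrow> m" by simp
  from tendsto_diff[OF tendsto_const tendsto_mult[OF tendsto_diff[OF tendsto_const
        filterlim_compose[OF \<alpha>_lim N]] tendsto_power[OF this]], of "(dist ob q)\<^sup>2" 1 2]
  show "(\<lambda>j. \<delta> (N j)) \<longlonglongrightarrow> (dist ob q)\<^sup>2 - m\<^sup>2" by (simp add: \<delta>_def)
  obtain p where "p \<in> fixpoints_on C T" "dist ob p \<le> m"
    using fixpoint_dist_le_of_approx_fixpoints[OF cat closed_imp_complete[OF C(2)] C(3) T(1,2),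
        where w = "\<lambda>j. x (N j)"] x_in_C approx m by blast
  then show "dist ob q \<le> m" using q(3) by force
qed

text \<open>Otherwise some subsequence has \<open>\<eta> \<longrightarrow> 0\<close> and \<open>\<delta> \<ge> \<epsilon>\<close>; along a further subsequence
  \<open>dist ob (x n)\<close> converges to some \<open>m\<close>, and then \<open>\<delta>\<close> converges to a nonpositive limit.\<close>
lemma \<eta>_small_imp_\<delta>_small:
  assumes "0 < \<epsilon>"
  shows "\<exists>\<theta>>0. \<exists>N. \<forall>n\<ge>N. \<eta> n < \<theta> \<longrightarrow> \<delta> n < \<epsilon>"
proof (rule ccontr)
  assume "\<not> ?thesis"
  then have "\<exists>n\<ge>k. \<eta> n < inverse (real (Suc k)) \<and> \<epsilon> \<le> \<delta> n" for k
    by (metis inverse_positive_iff_positive not_less of_nat_0_less_iff zero_less_Suc)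
  then obtain n where n: "\<And>k. k \<le> n k" "\<And>k. \<eta> (n k) < inverse (real (Suc k))" "\<And>k. \<epsilon> \<le> \<delta> (n k)"
    by metis
  have "dist ob (x k) \<le> dist ob q + R" for k
    using dist_triangle[of ob "x k" q] dist_x_q_le[of k] by (simp add: dist_commute)
  then have bdd: "bounded (range (\<lambda>k. dist ob (x (n k))))"
    by (intro boundedI[of _ "dist ob q + R"]) auto
  obtain m r where r: "strict_mono r" "(\<lambda>j. dist ob (x (n (r j)))) \<longlonglongrightarrow> m"
    using bounded_imp_convergent_subsequence[OF bdd] by (auto simp: o_def)
  define N where "N j = n (r j)" for j
  have "j \<le> N j" for j using seq_suble[OF r(1), of j] n(1)[of "r j"] by (simp add: N_def)
  then have N: "filterlim N sequentially sequentially"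
    by (intro filterlim_at_top_mono[OF filterlim_ident]) auto
  have "(\<lambda>j. \<eta> (N j)) \<longlonglongrightarrow> 0"
  proof (rule real_tendsto_sandwich[OF _ _ tendsto_const LIMSEQ_inverse_real_of_nat])
    show "eventually (\<lambda>j. \<eta> (N j) \<le> inverse (real (Suc j))) sequentially"
      using n(2) seq_suble[OF r(1)] by (intro always_eventually allI)
        (smt (verit) N_def le_imp_inverse_le of_nat_0_less_iff of_nat_le_iff Suc_le_mono zero_less_Suc)
  qed (simp add: \<eta>_nonneg)
  note lim = \<delta>_along[OF N this r(2)[folded N_def]]
  have "\<epsilon> \<le> (dist ob q)\<^sup>2 - m\<^sup>2" using n(3) by (intro LIMSEQ_le_const[OF lim(1)]) (auto simp: N_def)
  moreover have "(dist ob q)\<^sup>2 \<le> m\<^sup>2" using lim(2) by (simp add: power_mono)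
  ultimately show False using assms by simp
qed

theorem x_tendsto_q: "x \<longlonglongrightarrow> q"
proof -
  have "s \<longlonglongrightarrow> 0"
    by (rule tendsto_zero_of_recursive_ineqs_summable_error[OF _ \<gamma>_01 \<gamma>_not_summable s_Suc_le_pert
          pert_nonneg pert_summable s_Suc_le_\<rho> \<rho>_lim \<eta>_small_imp_\<delta>_small]) (simp add: s_def)
  then have "(\<lambda>n. dist (x n) q) \<longlonglongrightarrow> 0"
    using tendsto_real_sqrt by (fastforce simp: s_def)
  then show ?thesis by (rule tendsto_dist_iff[THEN iffD2])
qed

end

theorem theorem4p2:
  fixes C :: "'a::metric_space set" and T :: "'a \<Rightarrow> 'a" and ob :: 'a
    and \<alpha> \<beta> :: "nat \<Rightarrow> real" and u x y :: "nat \<Rightarrow> 'a"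
  assumes "hadamard_space TYPE('a)"
    and "C \<noteq> {}" and "closed C" and "geo_convex C"
    and "T ` C \<subseteq> C" and "nonexpansive_on C T" and "fixpoints_on C T \<noteq> {}"
    and "\<And>n. \<alpha> n \<in> {0<..<1}" and "\<And>n. \<beta> n \<in> {0<..<1}"
    and "x 0 \<in> C"
    and "\<And>n. y n = geo_comb (\<alpha> n) (u n) (T (x n))"
    and "\<And>n. x (Suc n) = geo_comb (1 - \<beta> n) (x n) (metric_proj C (y n))"
    and "\<alpha> \<longlonglongrightarrow> 0" and "\<not> summable \<alpha>"
    and "0 < liminf (\<lambda>n. ereal (\<beta> n))" and "limsup (\<lambda>n. ereal (\<beta> n)) < 1"
    and "summable (\<lambda>n. \<alpha> n * dist (u n) ob)"
  shows "\<exists>q\<in>fixpoints_on C T. x \<longlonglongrightarrow> q"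
proof -
  interpret halpern_mann_iteration C T ob \<alpha> \<beta> u x y
    using assms by unfold_locales
  show ?thesis using q(1,2) x_tendsto_q by (auto simp: fixpoints_on_def)
qed

end
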